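(* Let $0\le\Delta'\le\Delta\le1/8$ with $\Delta>0$, let $\xi\ge100$ be such that $m=\Delta^{-2}/\xi$ is a positive integer, let $\mathcal{D}=\mathcal{B}(1/2+\Delta)^{\otimes m}$ and $\mathcal{D}'=\mathcal{B}(1/2+\Delta')^{\otimes m}$, where $\mathcal{B}(\mu)$ is the Bernoulli distribution with mean $\mu$. Let $\mathcal{X}$ be any probability distribution on a sample space $X$. Then for any event $A\subseteq\{0,1\}^m\times X$ with $\Pr_{\mathcal{D}\otimes\mathcal{X}}[A]\le\gamma$, and any $Q\ge\xi$, $$\Pr_{\mathcal{D}'\otimes\mathcal{X}}[A]\le\gamma\cdot\exp\!\left(5\sqrt{(3\ln Q)/\xi}\right)+Q^{-6}.$$ *)

theory Defs
  imports "HOL-Probability.Probability"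
begin

text \<open>The product Bernoulli distribution B(mu)^(tensor m) on {0,1}^m, where a point of
  {0,1}^m is represented as a function nat => bool that is False outside {0..<m}.\<close>
definition bern_prod :: "nat \<Rightarrow> real \<Rightarrow> (nat \<Rightarrow> bool) pmf" where
  "bern_prod m \<mu> = Pi_pmf {0..<m} False (\<lambda>_. bernoulli_pmf \<mu>)"

end

theory Submission
  imports Defs
begin

text \<open>A sample of \<open>bern_prod m \<mu>\<close> with \<open>k\<close> ones has probability \<open>\<mu>^k (1 - \<mu>)^(m - k)\<close>,
  so for \<open>\<mu>' \<le> \<mu>\<close> the log-likelihood ratio of \<open>bern_prod m \<mu>'\<close> against \<open>bern_prod m \<mu>\<close> is
  \<open>m KL(\<mu>', \<mu>) - (k - m \<mu>') (log_odds \<mu> - log_odds \<mu>')\<close>, which is at most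
  \<open>m KL + s (log_odds \<mu> - log_odds \<mu>')\<close> as soon as \<open>k \<ge> m \<mu>' - s\<close>. For \<open>s = sqrt (3 m ln Q)\<close>,
  the chi-square bound on KL together with \<open>m \<Delta>\<^sup>2 = 1 / \<xi>\<close> makes this exponent at most
  \<open>5 sqrt (3 ln Q / \<xi>)\<close>. The remaining samples, with fewer than \<open>m \<mu>' - s\<close> ones, have probability
  at most \<open>exp (-2 s\<^sup>2 / m) = Q powr -6\<close> by Hoeffding's inequality. As the second factor \<open>M\<close> is
  the same in both products, the pointwise bound on the likelihood ratio transfers to every
  event \<open>A\<close>.\<close>

lemma measure_pair_pmf_finite:
  assumes "prob_space M" and A: "A \<in> sets (measure_pmf p \<Otimes>\<^sub>M M)"
    and S: "finite S" "set_pmf p \<subseteq> S"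
  shows "measure (measure_pmf p \<Otimes>\<^sub>M M) A = (\<Sum>x\<in>S. pmf p x * measure M (Pair x -` A))"
proof -
  interpret prob_space M by fact
  have fin: "finite (set_pmf p)" using S finite_subset by blast
  have "emeasure (measure_pmf p \<Otimes>\<^sub>M M) A = (\<integral>\<^sup>+x. emeasure M (Pair x -` A) \<partial>measure_pmf p)"
    by (rule emeasure_pair_measure_alt[OF A])
  also have "\<dots> = (\<Sum>x\<in>set_pmf p. emeasure M (Pair x -` A) * pmf p x)"
    by (rule nn_integral_measure_pmf_finite[OF fin]) auto
  also have "\<dots> = (\<Sum>x\<in>set_pmf p. ennreal (pmf p x * measure M (Pair x -` A)))"
    by (simp add: emeasure_eq_measure ennreal_mult' mult.commute)
  also have "\<dots> = ennreal (\<Sum>x\<in>set_pmf p. pmf p x * measure M (Pair x -` A))"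
    by (rule sum_ennreal) simp
  finally have "measure (measure_pmf p \<Otimes>\<^sub>M M) A
      = (\<Sum>x\<in>set_pmf p. pmf p x * measure M (Pair x -` A))"
    by (simp add: measure_def sum_nonneg)
  also have "\<dots> = (\<Sum>x\<in>S. pmf p x * measure M (Pair x -` A))"
    by (rule sum.mono_neutral_left[OF S]) (auto simp: set_pmf_eq)
  finally show ?thesis .
qed

lemma measure_pair_pmf_change_of_measure:
  fixes p q :: "'a pmf"
  assumes M: "prob_space M" and A: "A \<in> sets (measure_pmf p \<Otimes>\<^sub>M M)"
    and fin: "finite (set_pmf p)" "finite (set_pmf q)" and "c \<ge> 0"
    and ratio: "\<And>x. x \<in> set_pmf q \<Longrightarrow> x \<notin> B \<Longrightarrow> pmf q x \<le> c * pmf p x"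
  shows "measure (measure_pmf q \<Otimes>\<^sub>M M) A
           \<le> c * measure (measure_pmf p \<Otimes>\<^sub>M M) A + measure_pmf.prob q B"
proof -
  interpret prob_space M by fact
  define S where "S = set_pmf p \<union> set_pmf q"
  define F where "F x = measure M (Pair x -` A)" for x
  have S: "finite S" "set_pmf p \<subseteq> S" "set_pmf q \<subseteq> S" using fin by (auto simp: S_def)
  have A': "A \<in> sets (measure_pmf q \<Otimes>\<^sub>M M)"
    using A sets_pair_measure_cong[of "measure_pmf q" "measure_pmf p" M M] by simp
  have pointwise: "pmf q x * F x \<le> c * (pmf p x * F x) + pmf q x * indicator B x" for x
  proof (cases "x \<in> B")
    case True
    have "pmf q x * F x \<le> pmf q x" by (simp add: F_def mult_left_le)
    moreover have "0 \<le> c * (pmf p x * F x)" using \<open>c \<ge> 0\<close> by (simp add: F_def)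
    ultimately show ?thesis using True by simp
  next
    case False
    then have "pmf q x \<le> c * pmf p x"
      using ratio \<open>c \<ge> 0\<close> by (cases "x \<in> set_pmf q") (auto simp: set_pmf_eq)
    then show ?thesis using False by (simp add: F_def mult.assoc[symmetric] mult_right_mono)
  qed
  have "measure (measure_pmf q \<Otimes>\<^sub>M M) A = (\<Sum>x\<in>S. pmf q x * F x)"
    unfolding F_def using measure_pair_pmf_finite[OF M A' S(1,3)] .
  also have "\<dots> \<le> (\<Sum>x\<in>S. c * (pmf p x * F x) + pmf q x * indicator B x)"
    by (intro sum_mono pointwise)
  also have "\<dots> = c * (\<Sum>x\<in>S. pmf p x * F x) + (\<Sum>x\<in>S \<inter> B. pmf q x)"
    using S(1) by (simp add: sum.distrib sum_distrib_left sum.inter_restrict sum.inter_filter)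
  also have "(\<Sum>x\<in>S. pmf p x * F x) = measure (measure_pmf p \<Otimes>\<^sub>M M) A"
    unfolding F_def using measure_pair_pmf_finite[OF M A S(1,2)] ..
  also have "(\<Sum>x\<in>S \<inter> B. pmf q x) \<le> measure_pmf.prob q B"
    using S(1) by (simp add: measure_measure_pmf_finite[symmetric] measure_pmf.finite_measure_mono)
  finally show ?thesis by simp
qed

lemma set_pmf_bern_prod_outside:
  assumes "f \<in> set_pmf (bern_prod m \<mu>)" and "i \<ge> m"
  shows "\<not> f i"
  using assms set_Pi_pmf_subset[of "{0..<m}" False "\<lambda>_. bernoulli_pmf \<mu>"]
  by (auto simp: bern_prod_def PiE_dflt_def)

lemma finite_set_pmf_bern_prod: "finite (set_pmf (bern_prod m \<mu>))"
proof (rule finite_subset)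
  show "set_pmf (bern_prod m \<mu>) \<subseteq> PiE_dflt {0..<m} False (\<lambda>_. UNIV)"
    using set_Pi_pmf_subset[of "{0..<m}" False] by (auto simp: bern_prod_def PiE_dflt_def)
qed (auto intro: finite_PiE_dflt)

lemma pmf_bern_prod:
  assumes "0 \<le> \<mu>" "\<mu> \<le> 1" and outside: "\<And>i. i \<ge> m \<Longrightarrow> \<not> f i"
  shows "pmf (bern_prod m \<mu>) f
           = \<mu> ^ card {i\<in>{0..<m}. f i} * (1 - \<mu>) ^ (m - card {i\<in>{0..<m}. f i})"
proof -
  define K where "K = {i\<in>{0..<m}. f i}"
  have "pmf (bern_prod m \<mu>) f = (\<Prod>i\<in>{0..<m}. pmf (bernoulli_pmf \<mu>) (f i))"
    unfolding bern_prod_def using outside by (intro pmf_Pi') auto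
  also have "\<dots> = (\<Prod>i\<in>{0..<m}. if f i then \<mu> else 1 - \<mu>)"
    using assms(1,2) by (intro prod.cong) auto
  also have "\<dots> = (\<Prod>i\<in>{0..<m} \<inter> {i. f i}. \<mu>) * (\<Prod>i\<in>{0..<m} \<inter> - {i. f i}. 1 - \<mu>)"
    by (rule prod.If_cases) simp
  also have "\<dots> = \<mu> ^ card ({0..<m} \<inter> {i. f i}) * (1 - \<mu>) ^ card ({0..<m} \<inter> - {i. f i})"
    by simp
  also have "{0..<m} \<inter> {i. f i} = K" unfolding K_def by auto
  also have "{0..<m} \<inter> - {i. f i} = {0..<m} - K" unfolding K_def by auto
  also have "card ({0..<m} - K) = m - card K"
    unfolding K_def by (subst card_Diff_subset) auto
  finally show ?thesis unfolding K_def .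
qed

lemma bern_prod_lower_tail:
  assumes "0 \<le> \<mu>" "\<mu> \<le> 1" "m > 0" "s \<ge> 0"
  shows "measure_pmf.prob (bern_prod m \<mu>) {f. real (card {i\<in>{0..<m}. f i}) \<le> real m * \<mu> - s}
           \<le> exp (-2 * s\<^sup>2 / m)"
proof -
  have "binomial_pmf m \<mu> = map_pmf (\<lambda>f. card {i\<in>{0..<m}. f i}) (bern_prod m \<mu>)"
    unfolding bern_prod_def using assms by (intro binomial_pmf_altdef') auto
  then have "measure_pmf.prob (bern_prod m \<mu>) {f. real (card {i\<in>{0..<m}. f i}) \<le> real m * \<mu> - s}
      = measure_pmf.prob (binomial_pmf m \<mu>) {k. real k \<le> real m * \<mu> - s}"
    by (simp add: vimage_def)
  also have "\<dots> \<le> exp (-2 * s\<^sup>2 / m)"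
    using assms by (intro binomial_distribution.prob_le) (auto simp: binomial_distribution_def)
  finally show ?thesis .
qed

definition bernoulli_kl :: "real \<Rightarrow> real \<Rightarrow> real" where
  "bernoulli_kl p q = p * ln (p / q) + (1 - p) * ln ((1 - p) / (1 - q))"

definition log_odds :: "real \<Rightarrow> real" where
  "log_odds x = ln (x / (1 - x))"

lemma bernoulli_kl_le_chi_square:
  assumes "0 < p" "p < 1" "0 < q" "q < 1"
  shows "bernoulli_kl p q \<le> (p - q)\<^sup>2 / (q * (1 - q))"
proof -
  have "bernoulli_kl p q \<le> p * (p / q - 1) + (1 - p) * ((1 - p) / (1 - q) - 1)"
    unfolding bernoulli_kl_def using assms by (intro add_mono mult_left_mono ln_le_minus_one) auto
  also have "\<dots> = (p - q)\<^sup>2 / (q * (1 - q))"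
    using assms by (simp add: field_simps power2_eq_square)
  finally show ?thesis .
qed

lemma log_odds_diff_eq:
  assumes "0 < p" "p < 1" "0 < q" "q < 1"
  shows "log_odds q - log_odds p = ln ((1 - p) / (1 - q)) - ln (p / q)"
  using assms by (simp add: log_odds_def ln_div)

lemma log_odds_mono:
  assumes "0 < p" "p \<le> q" "q < 1"
  shows "log_odds p \<le> log_odds q"
proof -
  have "p / (1 - p) \<le> q / (1 - q)"
    using assms by (intro frac_le) auto
  then show ?thesis
    using assms by (simp add: log_odds_def)
qed

lemma log_odds_diff_le:
  assumes "0 < p" "p \<le> q" "q < 1"
  shows "log_odds q - log_odds p \<le> (q - p) / (1 - q) + (q - p) / p"
proof -
  have "ln ((1 - p) / (1 - q)) \<le> (1 - p) / (1 - q) - 1"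
    using assms by (intro ln_le_minus_one) auto
  also have "\<dots> = (q - p) / (1 - q)"
    using assms by (simp add: field_simps)
  finally have "ln ((1 - p) / (1 - q)) \<le> (q - p) / (1 - q)" .
  moreover have "- ln (p / q) \<le> q / p - 1"
    using assms ln_le_minus_one[of "q / p"] by (simp add: ln_div)
  moreover have "q / p - 1 = (q - p) / p"
    using assms by (simp add: field_simps)
  ultimately show ?thesis
    using assms by (simp add: log_odds_diff_eq)
qed

lemma binomial_weight_ratio_le:
  assumes "0 < p" "p \<le> q" "q < 1" and "k \<le> m" and "real m * p - s \<le> real k"
  shows "p ^ k * (1 - p) ^ (m - k)
           \<le> exp (m * bernoulli_kl p q + s * (log_odds q - log_odds p)) * (q ^ k * (1 - q) ^ (m - k))"
proof -
  define a where "a = ln (p / q)"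
  define b where "b = ln ((1 - p) / (1 - q))"
  have weight: "x ^ k * (1 - x) ^ (m - k) = exp (k * ln x + (m - k) * ln (1 - x))"
    if "0 < x" "x < 1" for x
    using that by (simp add: exp_add exp_of_nat_mult)
  have gap: "log_odds q - log_odds p = b - a"
    unfolding a_def b_def using assms by (intro log_odds_diff_eq) auto
  have "0 \<le> b - a"
    using log_odds_mono[OF assms(1-3)] gap by linarith
  have "real k * a + real (m - k) * b = m * b - k * (b - a)"
    using \<open>k \<le> m\<close> by (simp add: of_nat_diff algebra_simps)
  also have "\<dots> \<le> m * b - (m * p - s) * (b - a)"
    using assms(5) \<open>0 \<le> b - a\<close> by (intro diff_left_mono mult_right_mono) auto
  also have "\<dots> = m * bernoulli_kl p q + s * (log_odds q - log_odds p)"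
    unfolding gap by (simp add: bernoulli_kl_def a_def b_def algebra_simps)
  finally have exponent: "real k * a + real (m - k) * b
      \<le> m * bernoulli_kl p q + s * (log_odds q - log_odds p)" .
  have "p ^ k * (1 - p) ^ (m - k) = exp (k * a + (m - k) * b) * (q ^ k * (1 - q) ^ (m - k))"
    using assms by (simp add: weight exp_add[symmetric] a_def b_def ln_div algebra_simps)
  also have "\<dots> \<le> exp (m * bernoulli_kl p q + s * (log_odds q - log_odds p)) * (q ^ k * (1 - q) ^ (m - k))"
    using exponent assms by (intro mult_right_mono) auto
  finally show ?thesis .
qed

lemma pmf_bern_prod_ratio_le:
  assumes "0 < \<mu>'" "\<mu>' \<le> \<mu>" "\<mu> < 1" and outside: "\<And>i. i \<ge> m \<Longrightarrow> \<not> f i"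
    and "real m * \<mu>' - s \<le> real (card {i\<in>{0..<m}. f i})"
  shows "pmf (bern_prod m \<mu>') f
           \<le> exp (m * bernoulli_kl \<mu>' \<mu> + s * (log_odds \<mu> - log_odds \<mu>')) * pmf (bern_prod m \<mu>) f"
proof -
  have "card {i\<in>{0..<m}. f i} \<le> card {0..<m}"
    by (intro card_mono) auto
  then show ?thesis
    using assms binomial_weight_ratio_le[of \<mu>' \<mu> "card {i\<in>{0..<m}. f i}" m s]
    by (simp add: pmf_bern_prod[OF _ _ outside])
qed

lemma bern_prod_ratio_exponent_le:
  fixes \<Delta> \<Delta>' \<xi> Q :: real and m :: nat
  assumes "0 \<le> \<Delta>'" "\<Delta>' \<le> \<Delta>" "\<Delta> \<le> 1/8" "\<Delta> > 0" "\<xi> \<ge> 100"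
    and m: "real m = 1 / (\<Delta>\<^sup>2 * \<xi>)" and "Q \<ge> \<xi>"
  shows "m * bernoulli_kl (1/2 + \<Delta>') (1/2 + \<Delta>)
           + sqrt (3 * m * ln Q) * (log_odds (1/2 + \<Delta>) - log_odds (1/2 + \<Delta>'))
         \<le> 5 * sqrt (3 * ln Q / \<xi>)"
proof -
  define r where "r = sqrt (3 * ln Q / \<xi>)"
  have "exp 1 \<le> Q" using exp_le assms by linarith
  then have lnQ: "1 \<le> ln Q" using assms by (simp add: ln_ge_iff)
  have mD: "m * \<Delta>\<^sup>2 = 1 / \<xi>" using m assms by (simp add: field_simps)
  have sD: "sqrt (3 * m * ln Q) * \<Delta> = r"
  proof -
    have "sqrt (3 * m * ln Q) * \<Delta> = sqrt (3 * m * ln Q * \<Delta>\<^sup>2)"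
      using \<open>\<Delta> > 0\<close> by (simp add: real_sqrt_mult)
    also have "3 * m * ln Q * \<Delta>\<^sup>2 = 3 * ln Q * (m * \<Delta>\<^sup>2)" by (simp add: algebra_simps)
    also have "\<dots> = 3 * ln Q / \<xi>" using mD by simp
    finally show ?thesis unfolding r_def .
  qed
  have "\<Delta>\<^sup>2 \<le> 1/64" using assms power_mono[of \<Delta> "1/8" 2] by (simp add: power2_eq_square)
  have "bernoulli_kl (1/2 + \<Delta>') (1/2 + \<Delta>) \<le> (\<Delta> - \<Delta>')\<^sup>2 / (1/4 - \<Delta>\<^sup>2)"
    using bernoulli_kl_le_chi_square[of "1/2 + \<Delta>'" "1/2 + \<Delta>"] assms
    by (simp add: power2_eq_square algebra_simps)
  also have "\<dots> \<le> \<Delta>\<^sup>2 / (15/64)"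
    using assms \<open>\<Delta>\<^sup>2 \<le> 1/64\<close> by (intro frac_le power_mono) auto
  finally have kl: "bernoulli_kl (1/2 + \<Delta>') (1/2 + \<Delta>) \<le> 64/15 * \<Delta>\<^sup>2" by simp
  have "log_odds (1/2 + \<Delta>) - log_odds (1/2 + \<Delta>') \<le> (\<Delta> - \<Delta>') / (1/2 - \<Delta>) + (\<Delta> - \<Delta>') / (1/2 + \<Delta>')"
    using log_odds_diff_le[of "1/2 + \<Delta>'" "1/2 + \<Delta>"] assms by simp
  also have "\<dots> \<le> \<Delta> / (3/8) + \<Delta> / (1/2)"
    using assms by (intro add_mono frac_le) auto
  finally have odds: "log_odds (1/2 + \<Delta>) - log_odds (1/2 + \<Delta>') \<le> 14/3 * \<Delta>" by simp
  have "(64/5 / \<xi>)\<^sup>2 \<le> 3 * ln Q / \<xi>"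
  proof -
    have "(64/5 / \<xi>)\<^sup>2 = (64/5)\<^sup>2 / \<xi> / \<xi>" by (simp add: power2_eq_square)
    also have "\<dots> \<le> 3 / \<xi>" using assms by (simp add: field_simps)
    also have "\<dots> \<le> 3 * ln Q / \<xi>" using lnQ assms by (simp add: divide_right_mono)
    finally show ?thesis .
  qed
  then have small: "64/15 / \<xi> \<le> r / 3"
    using assms by (simp add: r_def real_le_rsqrt)
  have "m * bernoulli_kl (1/2 + \<Delta>') (1/2 + \<Delta>)
          + sqrt (3 * m * ln Q) * (log_odds (1/2 + \<Delta>) - log_odds (1/2 + \<Delta>'))
        \<le> m * (64/15 * \<Delta>\<^sup>2) + sqrt (3 * m * ln Q) * (14/3 * \<Delta>)"
    using kl odds lnQ by (intro add_mono mult_left_mono) auto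
  also have "\<dots> = 64/15 / \<xi> + 14/3 * r"
    using mD sD by (simp add: algebra_simps)
  finally show ?thesis using small unfolding r_def by linarith
qed

theorem mainTheorem11:
  fixes \<Delta> \<Delta>' \<xi> \<gamma> Q :: real and m :: nat and M :: "'x measure"
    and A :: "((nat \<Rightarrow> bool) \<times> 'x) set"
  assumes "0 \<le> \<Delta>'" and "\<Delta>' \<le> \<Delta>" and "\<Delta> \<le> 1/8" and "\<Delta> > 0"
    and "\<xi> \<ge> 100"
    and "m > 0" and "real m = 1 / (\<Delta>\<^sup>2 * \<xi>)"
    and "prob_space M"
    and "A \<in> sets (measure_pmf (bern_prod m (1/2 + \<Delta>)) \<Otimes>\<^sub>M M)"
    and "measure (measure_pmf (bern_prod m (1/2 + \<Delta>)) \<Otimes>\<^sub>M M) A \<le> \<gamma>"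
    and "Q \<ge> \<xi>"
  shows "measure (measure_pmf (bern_prod m (1/2 + \<Delta>')) \<Otimes>\<^sub>M M) A
           \<le> \<gamma> * exp (5 * sqrt (3 * ln Q / \<xi>)) + Q powr (-6)"
proof -
  define s where "s = sqrt (3 * real m * ln Q)"
  define L where "L = {f. real (card {i\<in>{0..<m}. f i}) \<le> real m * (1/2 + \<Delta>') - s}"
  define c where "c = exp (5 * sqrt (3 * ln Q / \<xi>))"
  have lnQ: "0 \<le> ln Q" using assms by simp
  have ratio: "pmf (bern_prod m (1/2 + \<Delta>')) f \<le> c * pmf (bern_prod m (1/2 + \<Delta>)) f"
    if "f \<in> set_pmf (bern_prod m (1/2 + \<Delta>'))" "f \<notin> L" for f
    using pmf_bern_prod_ratio_le[of "1/2 + \<Delta>'" "1/2 + \<Delta>" m f s] that assms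
      bern_prod_ratio_exponent_le[OF assms(1-5,7,11)]
    by (fastforce simp: L_def s_def c_def set_pmf_bern_prod_outside
        intro: order_trans mult_right_mono)
  have "measure (measure_pmf (bern_prod m (1/2 + \<Delta>')) \<Otimes>\<^sub>M M) A
      \<le> c * measure (measure_pmf (bern_prod m (1/2 + \<Delta>)) \<Otimes>\<^sub>M M) A
         + measure_pmf.prob (bern_prod m (1/2 + \<Delta>')) L"
    using assms(8,9) ratio
    by (intro measure_pair_pmf_change_of_measure) (auto simp: c_def finite_set_pmf_bern_prod)
  moreover have "measure_pmf.prob (bern_prod m (1/2 + \<Delta>')) L \<le> exp (-2 * s\<^sup>2 / m)"
    unfolding L_def using assms lnQ by (intro bern_prod_lower_tail) (auto simp: s_def)
  moreover have "exp (-2 * s\<^sup>2 / m) = Q powr (-6)"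
    using assms lnQ by (simp add: s_def powr_def)
  moreover have "c * measure (measure_pmf (bern_prod m (1/2 + \<Delta>)) \<Otimes>\<^sub>M M) A \<le> \<gamma> * c"
    using assms(10) by (simp add: c_def mult.commute)
  ultimately show ?thesis unfolding c_def by linarith
qed

end
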